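(* Suppose there exist $\kappa \in \mathbb{R}$ and a function $f:\mathbb{N}\to\mathbb{R}$ such that $\lambda_3(G) \le \kappa|V(G)| + f(|V(G)|)$ for every simple graph $G$ with at least $3$ vertices. If $\frac{f(n)}{n} \to 0$ as $n \to \infty$, then every simple graph $G$ with at least $3$ vertices satisfies \[ \lambda_3(G) \le \kappa |V(G)| - 1. \]
   Context: $\lambda_3(G)$ denotes the third largest eigenvalue (with multiplicity) of the adjacency matrix of $G$. *)

theory Defs
  imports "Jordan_Normal_Form.Char_Poly" "HOL-Computational_Algebra.Polynomial"
begin

text \<open>A simple graph on the vertex set {0..<n}, given by an edge relation E
  (only its restriction to {0..<n} matters): symmetric and loop-free.\<close>
definition simple_graph :: "nat \<Rightarrow> (nat \<Rightarrow> nat \<Rightarrow> bool) \<Rightarrow> bool" where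
  "simple_graph n E \<longleftrightarrow> (\<forall>i<n. \<forall>j<n. E i j = E j i) \<and> (\<forall>i<n. \<not> E i i)"

definition adj_matrix :: "nat \<Rightarrow> (nat \<Rightarrow> nat \<Rightarrow> bool) \<Rightarrow> real mat" where
  "adj_matrix n E = mat n n (\<lambda>(i, j). if E i j then 1 else 0)"

text \<open>Multiset of (real) eigenvalues with algebraic multiplicity = roots of the
  characteristic polynomial (the adjacency matrix is real symmetric, so this has size n).\<close>
definition eigenvalues_mset :: "nat \<Rightarrow> (nat \<Rightarrow> nat \<Rightarrow> bool) \<Rightarrow> real multiset" where
  "eigenvalues_mset n E = proots (char_poly (adj_matrix n E))"

definition kth_largest_eigenvalue :: "nat \<Rightarrow> nat \<Rightarrow> (nat \<Rightarrow> nat \<Rightarrow> bool) \<Rightarrow> real" where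
  "kth_largest_eigenvalue k n E = rev (sorted_list_of_multiset (eigenvalues_mset n E)) ! (k - 1)"

definition lambda3 :: "nat \<Rightarrow> (nat \<Rightarrow> nat \<Rightarrow> bool) \<Rightarrow> real" where
  "lambda3 n E = kth_largest_eigenvalue 3 n E"

end

theory Submission
  imports Defs "Jordan_Normal_Form.Schur_Decomposition"
begin

text \<open>Blow every vertex of \<open>G\<close> up into a clique \<open>K\<^sub>t\<close>, joining two copies whenever
  their originals are equal or adjacent. The adjacency matrix of the blow-up is
  \<open>J\<^sub>t \<otimes> (A + I) - I\<close>, whose spectrum consists of \<open>t(\<lambda> + 1) - 1\<close> for every eigenvalue
  \<open>\<lambda>\<close> of \<open>A\<close> together with \<open>-1\<close> of multiplicity \<open>(t - 1)n\<close>; hence the third largest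
  eigenvalue of the blow-up is at least \<open>t(\<lambda>\<^sub>3(G) + 1) - 1\<close>. Applying the hypothesis to the
  blow-up on \<open>tn\<close> vertices and dividing by \<open>tn\<close> gives
  \<open>(\<lambda>\<^sub>3(G) + 1)/n \<le> \<kappa> + (f(tn) + 1)/(tn)\<close>, and the right-hand side tends to \<open>\<kappa>\<close>.\<close>

definition fold_mat :: "nat \<Rightarrow> nat \<Rightarrow> 'a :: zero_neq_one mat" where
  "fold_mat N n = mat N N (\<lambda>(k, l). if n \<le> k \<and> l = k mod n then 1 else 0)"

lemma fold_mat_dim [simp]: "dim_row (fold_mat N n) = N" "dim_col (fold_mat N n) = N"
  by (simp_all add: fold_mat_def)

lemma fold_mat_carrier [simp]: "fold_mat N n \<in> carrier_mat N N"
  by (simp add: carrier_matI)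

lemma index_fold_mat_mult:
  fixes M :: "'a :: semiring_1 mat"
  assumes M: "M \<in> carrier_mat N nc" and k: "k < N" and l: "l < nc"
  shows "(fold_mat N n * M) $$ (k, l) = (if n \<le> k then M $$ (k mod n, l) else 0)"
proof -
  have "(fold_mat N n * M) $$ (k, l) = (\<Sum>m<N. if n \<le> k \<and> m = k mod n then M $$ (m, l) else 0)"
    using assms by (auto simp: fold_mat_def scalar_prod_def lessThan_atLeast0 intro!: sum.cong)
  also have "\<dots> = (if n \<le> k then M $$ (k mod n, l) else 0)"
    using k le_less_trans[OF mod_less_eq_dividend[of k n]] by simp
  finally show ?thesis .
qed

lemma index_one_add_fold_mat_mult:
  fixes M :: "'a :: semiring_1 mat"
  assumes M: "M \<in> carrier_mat N nc" and k: "k < N" and l: "l < nc"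
  shows "((1\<^sub>m N + fold_mat N n) * M) $$ (k, l) = M $$ (k, l) + (if n \<le> k then M $$ (k mod n, l) else 0)"
  using assms by (simp add: add_mult_distrib_mat[OF one_carrier_mat fold_mat_carrier M]
      index_fold_mat_mult[OF M k l, symmetric])

lemma index_one_minus_fold_mat_mult:
  fixes M :: "'a :: ring_1 mat"
  assumes M: "M \<in> carrier_mat N nc" and k: "k < N" and l: "l < nc"
  shows "((1\<^sub>m N - fold_mat N n) * M) $$ (k, l) = M $$ (k, l) - (if n \<le> k then M $$ (k mod n, l) else 0)"
  using assms by (simp add: minus_mult_distrib_mat[OF one_carrier_mat fold_mat_carrier M]
      index_fold_mat_mult[OF M k l, symmetric])

lemma one_add_fold_mat_inverse:
  assumes n: "0 < n"
  shows "(1\<^sub>m N + fold_mat N n) * (1\<^sub>m N - fold_mat N n) = (1\<^sub>m N :: 'a :: ring_1 mat)"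
    and "(1\<^sub>m N - fold_mat N n) * (1\<^sub>m N + fold_mat N n) = (1\<^sub>m N :: 'a :: ring_1 mat)"
proof -
  have mod_less: "k mod n < n" "k mod n < N" if "k < N" for k
    using that mod_less_divisor[OF n] le_less_trans[OF mod_less_eq_dividend] by blast+
  have P: "1\<^sub>m N + fold_mat N n \<in> carrier_mat N N" and Q: "1\<^sub>m N - fold_mat N n \<in> carrier_mat N N"
    by (simp_all add: minus_carrier_mat)
  show "(1\<^sub>m N + fold_mat N n) * (1\<^sub>m N - fold_mat N n) = (1\<^sub>m N :: 'a mat)"
  proof (rule eq_matI)
    fix k l assume "k < dim_row (1\<^sub>m N :: 'a mat)" "l < dim_col (1\<^sub>m N :: 'a mat)"
    then have kl: "k < N" "l < N" by simp_all
    then show "((1\<^sub>m N + fold_mat N n) * (1\<^sub>m N - fold_mat N n)) $$ (k, l) = (1\<^sub>m N :: 'a mat) $$ (k, l)"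
      by (subst index_one_add_fold_mat_mult[OF Q kl])
        (use kl mod_less[OF kl(1)] in \<open>auto simp: fold_mat_def\<close>)
  qed (use P Q in auto)
  show "(1\<^sub>m N - fold_mat N n) * (1\<^sub>m N + fold_mat N n) = (1\<^sub>m N :: 'a mat)"
  proof (rule eq_matI)
    fix k l assume "k < dim_row (1\<^sub>m N :: 'a mat)" "l < dim_col (1\<^sub>m N :: 'a mat)"
    then have kl: "k < N" "l < N" by simp_all
    then show "((1\<^sub>m N - fold_mat N n) * (1\<^sub>m N + fold_mat N n)) $$ (k, l) = (1\<^sub>m N :: 'a mat) $$ (k, l)"
      by (subst index_one_minus_fold_mat_mult[OF P kl])
        (use kl mod_less[OF kl(1)] in \<open>auto simp: fold_mat_def\<close>)
  qed (use P Q in auto)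
qed

lemma card_mod_eq_between:
  assumes "l < n"
  shows "card {m. n \<le> m \<and> m < t * n \<and> m mod n = l} = t - 1"
proof -
  have "{m. n \<le> m \<and> m < t * n \<and> m mod n = l} = (\<lambda>q. q * n + l) ` {1..<t}"
  proof
    show "{m. n \<le> m \<and> m < t * n \<and> m mod n = l} \<subseteq> (\<lambda>q. q * n + l) ` {1..<t}"
    proof
      fix m assume "m \<in> {m. n \<le> m \<and> m < t * n \<and> m mod n = l}"
      then have "n \<le> m" "m < t * n" "m mod n = l" by auto
      then have "m = (m div n) * n + l" "1 \<le> m div n" "m div n < t"
        using assms div_le_mono[of n m n] by (auto simp: less_mult_imp_div_less)
      then show "m \<in> (\<lambda>q. q * n + l) ` {1..<t}" by auto
    qed
  next
    show "(\<lambda>q. q * n + l) ` {1..<t} \<subseteq> {m. n \<le> m \<and> m < t * n \<and> m mod n = l}"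
    proof
      fix m assume "m \<in> (\<lambda>q. q * n + l) ` {1..<t}"
      then obtain q where q: "1 \<le> q" "q < t" "m = q * n + l" by auto
      have "n \<le> m" using q(1) q(3) by (metis le_add1 le_trans mult_1 mult_le_mono1)
      moreover have "m < (q + 1) * n" using q(3) assms by simp
      moreover have "(q + 1) * n \<le> t * n" using q(2) by (intro mult_le_mono1) simp
      moreover have "m mod n = l" using q(3) assms by simp
      ultimately show "m \<in> {m. n \<le> m \<and> m < t * n \<and> m mod n = l}" by simp
    qed
  qed
  moreover have "inj_on (\<lambda>q. q * n + l) {1..<t}"
    using assms by (auto simp: inj_on_def)
  ultimately show ?thesis by (simp add: card_image)
qed

text \<open>The Kronecker product \<open>J\<^sub>t \<otimes> C\<close> of the all-ones \<open>t \<times> t\<close> matrix with \<open>C\<close>.\<close>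

definition blowup_mat :: "nat \<Rightarrow> 'a mat \<Rightarrow> 'a mat" where
  "blowup_mat t C = mat (t * dim_row C) (t * dim_row C) (\<lambda>(k, l). C $$ (k mod dim_row C, l mod dim_row C))"

lemma blowup_mat_carrier [simp]: "C \<in> carrier_mat n n \<Longrightarrow> blowup_mat t C \<in> carrier_mat (t * n) (t * n)"
  by (simp add: blowup_mat_def)

lemma index_blowup_mat_mult_fold_mat:
  fixes C :: "'a :: semiring_1 mat"
  assumes C: "C \<in> carrier_mat n n" and k: "k < t * n" and l: "l < t * n"
  shows "(blowup_mat t C * fold_mat (t * n) n) $$ (k, l) =
    (if l < n then of_nat (t - 1) * C $$ (k mod n, l) else 0)"
proof -
  let ?I = "{m. n \<le> m \<and> m < t * n \<and> m mod n = l}"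
  have "0 < n" using k by (cases n) auto
  have "(blowup_mat t C * fold_mat (t * n) n) $$ (k, l) =
      (\<Sum>m\<in>{0..<t * n}. if m \<in> ?I then C $$ (k mod n, l) else 0)"
    using assms by (auto simp: blowup_mat_def fold_mat_def scalar_prod_def intro!: sum.cong)
  also have "\<dots> = (\<Sum>m\<in>{0..<t * n} \<inter> ?I. C $$ (k mod n, l))"
    by (rule sum.inter_restrict[symmetric]) simp
  also have "\<dots> = (\<Sum>m\<in>?I. C $$ (k mod n, l))"
    by (rule sum.cong) auto
  also have "\<dots> = of_nat (card ?I) * C $$ (k mod n, l)"
    by simp
  also have "\<dots> = (if l < n then of_nat (t - 1) * C $$ (k mod n, l) else 0)"
  proof (cases "l < n")
    case False
    then have "?I = {}" using mod_less_divisor[OF \<open>0 < n\<close>] by auto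
    then show ?thesis unfolding \<open>?I = {}\<close> using False by simp
  qed (simp add: card_mod_eq_between)
  finally show ?thesis .
qed

text \<open>With \<open>P = 1 + fold_mat (t * n) n\<close>, right multiplication by \<open>P\<close> adds the \<open>t - 1\<close>
  further copies of each column to the first block, and \<open>P\<^sup>-\<^sup>1 = 1 - fold_mat (t * n) n\<close>
  then clears all rows outside the first block, which have become copies of the first \<open>n\<close> rows.\<close>

lemma blowup_mat_similar_block:
  fixes C :: "'a :: comm_ring_1 mat"
  assumes C: "C \<in> carrier_mat n n" and n: "0 < n" and t: "0 < t"
  shows "similar_mat (blowup_mat t C)
    (four_block_mat (of_nat t \<cdot>\<^sub>m C) (mat n ((t - 1) * n) (\<lambda>(i, j). C $$ (i, j mod n)))
      (0\<^sub>m ((t - 1) * n) n) (0\<^sub>m ((t - 1) * n) ((t - 1) * n)))"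
    (is "similar_mat ?B ?D")
proof -
  define N where "N = t * n"
  define P :: "'a mat" where "P = 1\<^sub>m N + fold_mat N n"
  define Q :: "'a mat" where "Q = 1\<^sub>m N - fold_mat N n"
  have NN: "n + (t - 1) * n = N" using t by (simp add: N_def algebra_simps)
  have P: "P \<in> carrier_mat N N" and Q: "Q \<in> carrier_mat N N"
    by (simp_all add: P_def Q_def minus_carrier_mat)
  have B: "?B \<in> carrier_mat N N" using C by (simp add: N_def)
  have D: "?D \<in> carrier_mat N N" using C NN[symmetric] by auto
  have mod_less: "k mod n < n" "k mod n < N" if "k < N" for k
    using that mod_less_divisor[OF n] le_less_trans[OF mod_less_eq_dividend] by blast+
  define F where "F = (\<lambda>i l. if l < n then of_nat t * C $$ (i, l) else C $$ (i, l mod n))"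
  have index_D: "?D $$ (k, l) = (if k < n then F k l else 0)" if "k < N" "l < N" for k l
    using that C NN[symmetric] by (auto simp: F_def le_mod_geq)
  have PQ: "P * Q = 1\<^sub>m N" and QP: "Q * P = 1\<^sub>m N"
    unfolding P_def Q_def using one_add_fold_mat_inverse[OF n] by blast+
  have BP: "?B * P = P * ?D"
  proof (rule eq_matI)
    fix k l assume "k < dim_row (P * ?D)" "l < dim_col (P * ?D)"
    then have kl: "k < N" "l < N" using P D NN C by auto
    have "(?B * P) $$ (k, l) = ?B $$ (k, l) + (?B * fold_mat N n) $$ (k, l)"
      unfolding P_def using B kl
      by (simp add: mult_add_distrib_mat[OF B one_carrier_mat fold_mat_carrier])
    also have "\<dots> = F (k mod n) l"
      using kl C t index_blowup_mat_mult_fold_mat[OF C, of k t l] mod_less[OF kl(1)]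
      by (auto simp: N_def F_def blowup_mat_def algebra_simps)
    also have "\<dots> = (P * ?D) $$ (k, l)"
      unfolding P_def
      using kl mod_less[OF kl(1)] index_D[OF kl] index_D[OF mod_less(2)[OF kl(1)] kl(2)]
      by (subst index_one_add_fold_mat_mult[OF D kl]) auto
    finally show "(?B * P) $$ (k, l) = (P * ?D) $$ (k, l)" .
  qed (use P B D in auto)
  have "?B = ?B * (P * Q)" using B by (simp add: PQ)
  also have "\<dots> = P * ?D * Q" using B P Q D by (simp add: BP flip: assoc_mult_mat)
  finally have "?B = P * ?D * Q" .
  with B D P Q PQ QP show ?thesis by (intro similar_matI[of ?B ?D P Q N]) auto
qed

lemma similar_mat_wit_add_smult_one:
  fixes A :: "'a :: comm_ring_1 mat"
  assumes wit: "similar_mat_wit A B P Q" and A: "A \<in> carrier_mat n n"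
  shows "similar_mat_wit (A + c \<cdot>\<^sub>m 1\<^sub>m n) (B + c \<cdot>\<^sub>m 1\<^sub>m n) P Q"
proof -
  note W = similar_mat_witD2[OF A wit]
  have "P * (B + c \<cdot>\<^sub>m 1\<^sub>m n) = P * B + c \<cdot>\<^sub>m P"
    using W by (simp add: mult_add_distrib_mat[of P n n] mult_smult_distrib[of P n n "1\<^sub>m n" n])
  then have "P * (B + c \<cdot>\<^sub>m 1\<^sub>m n) * Q = P * B * Q + c \<cdot>\<^sub>m (P * Q)"
    using W by (simp add: add_mult_distrib_mat[of _ n n] mult_smult_assoc_mat[of _ n n])
  then show ?thesis
    using W by (intro similar_mat_witI[of P Q n]) auto
qed

lemma diag_mat_affine:
  fixes B :: "'a :: semiring_1 mat"
  assumes "B \<in> carrier_mat n n"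
  shows "diag_mat (s \<cdot>\<^sub>m B + c \<cdot>\<^sub>m 1\<^sub>m n) = map (\<lambda>a. s * a + c) (diag_mat B)"
  using assms by (intro nth_equalityI) (auto simp: diag_mat_def)

lemma char_poly_affine:
  fixes A :: "'a :: conjugatable_ordered_field mat"
  assumes A: "A \<in> carrier_mat n n" and split: "char_poly A = (\<Prod>a\<leftarrow>es. [:- a, 1:])"
  shows "char_poly (s \<cdot>\<^sub>m A + c \<cdot>\<^sub>m 1\<^sub>m n) = (\<Prod>a\<leftarrow>es. [:- (s * a + c), 1:])"
proof -
  obtain B P Q where "schur_decomposition A es = (B, P, Q)"
    by (cases "schur_decomposition A es") auto
  then have wit: "similar_mat_wit A B P Q" and ut: "upper_triangular B" and diag: "diag_mat B = es"
    using schur_decomposition[OF A split] by auto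
  have B: "B \<in> carrier_mat n n" using similar_mat_witD2[OF A wit] by simp
  have "similar_mat_wit (s \<cdot>\<^sub>m A + c \<cdot>\<^sub>m 1\<^sub>m n) (s \<cdot>\<^sub>m B + c \<cdot>\<^sub>m 1\<^sub>m n) P Q"
    using A by (intro similar_mat_wit_add_smult_one similar_mat_wit_smult wit) simp
  then have "char_poly (s \<cdot>\<^sub>m A + c \<cdot>\<^sub>m 1\<^sub>m n) = char_poly (s \<cdot>\<^sub>m B + c \<cdot>\<^sub>m 1\<^sub>m n)"
    by (intro char_poly_similar) (auto simp: similar_mat_def)
  also have "\<dots> = (\<Prod>a\<leftarrow>diag_mat (s \<cdot>\<^sub>m B + c \<cdot>\<^sub>m 1\<^sub>m n). [:- a, 1:])"
    using B ut by (intro char_poly_upper_triangular[of _ n]) (auto simp: upper_triangular_def)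
  also have "\<dots> = (\<Prod>a\<leftarrow>es. [:- (s * a + c), 1:])"
    using B diag by (simp add: diag_mat_affine o_def)
  finally show ?thesis .
qed

lemma char_poly_add_smult_one:
  fixes A :: "'a :: conjugatable_ordered_field mat"
  assumes A: "A \<in> carrier_mat n n" and split: "char_poly A = (\<Prod>a\<leftarrow>es. [:- a, 1:])"
  shows "char_poly (A + c \<cdot>\<^sub>m 1\<^sub>m n) = (\<Prod>a\<leftarrow>map (\<lambda>a. a + c) es. [:- a, 1:])"
proof -
  have "A + c \<cdot>\<^sub>m 1\<^sub>m n = 1 \<cdot>\<^sub>m A + c \<cdot>\<^sub>m 1\<^sub>m n"
    using A by (intro eq_matI) auto
  then show ?thesis by (simp add: char_poly_affine[OF A split] o_def)
qed

lemma char_poly_blowup_mat: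
  fixes C :: "'a :: conjugatable_ordered_field mat"
  assumes C: "C \<in> carrier_mat n n" and n: "0 < n" and t: "0 < t"
    and split: "char_poly C = (\<Prod>a\<leftarrow>es. [:- a, 1:])"
  shows "char_poly (blowup_mat t C) =
    (\<Prod>a\<leftarrow>map (\<lambda>a. of_nat t * a) es @ replicate ((t - 1) * n) 0. [:- a, 1:])"
proof -
  let ?m = "(t - 1) * n"
  have tC: "of_nat t \<cdot>\<^sub>m C = of_nat t \<cdot>\<^sub>m C + 0 \<cdot>\<^sub>m 1\<^sub>m n"
    using C by (intro eq_matI) auto
  have split_tC: "char_poly (of_nat t \<cdot>\<^sub>m C) = (\<Prod>a\<leftarrow>map (\<lambda>a. of_nat t * a) es. [:- a, 1:])"
    by (subst tC) (simp add: char_poly_affine[OF C split] o_def)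
  have split_0: "char_poly (0\<^sub>m ?m ?m :: 'a mat) = (\<Prod>a\<leftarrow>replicate ?m 0. [:- a, 1:])"
  proof -
    have "diag_mat (0\<^sub>m ?m ?m :: 'a mat) = replicate ?m 0"
      by (intro nth_equalityI) (auto simp: diag_mat_def)
    then show ?thesis
      by (subst char_poly_upper_triangular[of _ ?m]) (auto simp: upper_triangular_def)
  qed
  have "char_poly (blowup_mat t C) = char_poly (four_block_mat (of_nat t \<cdot>\<^sub>m C)
      (mat n ?m (\<lambda>(i, j). C $$ (i, j mod n))) (0\<^sub>m ?m n) (0\<^sub>m ?m ?m))"
    by (rule char_poly_similar[OF blowup_mat_similar_block[OF C n t]])
  also have "\<dots> = char_poly (of_nat t \<cdot>\<^sub>m C) * char_poly (0\<^sub>m ?m ?m :: 'a mat)"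
  proof (rule char_poly_0_block[OF refl])
    show "\<exists>es. char_poly (of_nat t \<cdot>\<^sub>m C) = (\<Prod>a\<leftarrow>es. [:- a, 1:])"
      using split_tC by blast
    show "\<exists>es. char_poly (0\<^sub>m ?m ?m :: 'a mat) = (\<Prod>a\<leftarrow>es. [:- a, 1:])"
      using split_0 by blast
  qed (use C in auto)
  also have "\<dots> = (\<Prod>a\<leftarrow>map (\<lambda>a. of_nat t * a) es @ replicate ?m 0. [:- a, 1:])"
    using split_tC split_0 by simp
  finally show ?thesis .
qed

lemma proots_prod_list_linear: "proots (\<Prod>a\<leftarrow>as. [:- a, 1:]) = mset (as :: 'a :: idom list)"
proof (induction as)
  case (Cons a as)
  have "proots ([:- a, 1:] * (\<Prod>a\<leftarrow>as. [:- a, 1:])) =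
      proots [:- a, 1:] + proots (\<Prod>a\<leftarrow>as. [:- a, 1:])"
    by (rule proots_mult) auto
  with Cons show ?case by simp
qed simp

lemma map_of_real_mult_conjugate:
  fixes A :: "real mat"
  assumes "dim_vec v = dim_col A"
  shows "map_mat complex_of_real A *\<^sub>v conjugate v = conjugate (map_mat complex_of_real A *\<^sub>v v)"
  using assms by (intro eq_vecI) (auto simp: scalar_prod_def)

lemma real_symmetric_eigenvalue_real:
  fixes A :: "real mat"
  assumes A: "A \<in> carrier_mat n n" and sym: "transpose_mat A = A"
    and ev: "eigenvalue (map_mat complex_of_real A) a"
  shows "a \<in> \<real>"
proof -
  let ?A = "map_mat complex_of_real A"
  obtain v where v: "v \<in> carrier_vec n" "v \<noteq> 0\<^sub>v n" "?A *\<^sub>v v = a \<cdot>\<^sub>v v"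
    using ev A unfolding eigenvalue_def eigenvector_def by auto
  let ?w = "conjugate v \<bullet> v"
  have "?w = v \<bullet>c v" using v(1) by (simp add: conjugate_vec_sprod_comm[of v n v])
  then have w: "?w \<noteq> 0" using v(1,2) by simp
  have "a * ?w = conjugate v \<bullet> (?A *\<^sub>v v)" using v by simp
  also have "\<dots> = (transpose_mat ?A *\<^sub>v conjugate v) \<bullet> v"
    using A v(1) by (intro transpose_vec_mult_scalar[symmetric]) auto
  also have "\<dots> = conjugate (?A *\<^sub>v v) \<bullet> v"
    using A v(1) sym by (simp add: map_mat_transpose map_of_real_mult_conjugate)
  also have "\<dots> = cnj a * ?w" using v by (simp add: conjugate_smult_vec)
  finally show ?thesis using w by (simp add: Reals_cnj_iff)
qed

lemma char_poly_real_symmetric_splits: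
  fixes A :: "real mat"
  assumes A: "A \<in> carrier_mat n n" and sym: "transpose_mat A = A"
  obtains es where "char_poly A = (\<Prod>a\<leftarrow>es. [:- a, 1:])" "length es = n"
proof -
  interpret of_real_poly_hom: map_poly_inj_idom_hom complex_of_real ..
  let ?A = "map_mat complex_of_real A"
  obtain as where as: "char_poly ?A = (\<Prod>a\<leftarrow>as. [:- a, 1:])" "length as = n"
    using char_poly_factorized[of ?A n] A by auto
  have real: "a \<in> \<real>" if "a \<in> set as" for a
  proof (rule real_symmetric_eigenvalue_real[OF A sym])
    show "eigenvalue ?A a"
      using that A by (simp add: eigenvalue_root_char_poly[of _ n] as(1) poly_prod_list)
  qed
  from real have "(\<Prod>a\<leftarrow>as. [:- a, 1:]) = (\<Prod>r\<leftarrow>map Re as. [:- complex_of_real r, 1:])"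
    by (induction as) auto
  moreover have "map_poly complex_of_real (char_poly A) = char_poly ?A"
    by (rule of_real_hom.char_poly_hom[OF A, symmetric])
  ultimately have "map_poly complex_of_real (char_poly A) =
      map_poly complex_of_real (\<Prod>r\<leftarrow>map Re as. [:- r, 1:])"
    using as(1) by (simp add: of_real_poly_hom.hom_prod_list o_def)
  then have "char_poly A = (\<Prod>r\<leftarrow>map Re as. [:- r, 1:])"
    by simp
  with as(2) show ?thesis by (intro that[of "map Re as"]) simp_all
qed

lemma le_nth_rev_sorted_list_of_multiset_iff:
  fixes X :: "'a :: linorder multiset"
  assumes k: "k < size X"
  shows "c \<le> rev (sorted_list_of_multiset X) ! k \<longleftrightarrow> k < size (filter_mset ((\<le>) c) X)"
proof -
  define L where "L = rev (sorted_list_of_multiset X)"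
  have len: "length L = size X"
    by (metis L_def length_rev mset_sorted_list_of_multiset size_mset)
  have desc: "L ! j \<le> L ! i" if "i \<le> j" "j < length L" for i j
    using that by (intro sorted_rev_nth_mono) (simp_all add: L_def)
  have "size (filter_mset ((\<le>) c) X) = length (filter ((\<le>) c) L)"
    by (metis L_def mset_filter mset_rev mset_sorted_list_of_multiset size_mset)
  also have "\<dots> = card {i. i < length L \<and> c \<le> L ! i}"
    by (rule length_filter_conv_card)
  finally have size_eq: "size (filter_mset ((\<le>) c) X) = card {i. i < length L \<and> c \<le> L ! i}" .
  show ?thesis
  proof
    assume "c \<le> rev (sorted_list_of_multiset X) ! k"
    then have "{..k} \<subseteq> {i. i < length L \<and> c \<le> L ! i}"
      using k len desc unfolding L_def[symmetric] by (auto intro: order_trans)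
    then have "card {..k} \<le> card {i. i < length L \<and> c \<le> L ! i}"
      by (intro card_mono) auto
    then show "k < size (filter_mset ((\<le>) c) X)" using size_eq by simp
  next
    assume filtered: "k < size (filter_mset ((\<le>) c) X)"
    show "c \<le> rev (sorted_list_of_multiset X) ! k"
    proof (rule ccontr)
      assume "\<not> c \<le> rev (sorted_list_of_multiset X) ! k"
      then have "{i. i < length L \<and> c \<le> L ! i} \<subseteq> {..<k}"
        using desc unfolding L_def[symmetric] by (auto simp: not_less intro: order_trans)
      then have "card {i. i < length L \<and> c \<le> L ! i} \<le> k"
        using card_mono[of "{..<k}"] by fastforce
      with filtered size_eq show False by simp
    qed
  qed
qed

lemma nth_rev_sorted_list_of_multiset_image_mono:
  fixes X :: "'a :: linorder multiset" and Y :: "'b :: linorder multiset"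
  assumes g: "mono g" and k: "k < size X"
  shows "g (rev (sorted_list_of_multiset X) ! k) \<le> rev (sorted_list_of_multiset (image_mset g X + Y)) ! k"
proof -
  let ?x = "rev (sorted_list_of_multiset X) ! k"
  have "k < size (filter_mset ((\<le>) ?x) X)"
    by (rule le_nth_rev_sorted_list_of_multiset_iff[OF k, THEN iffD1]) simp
  also have "\<dots> \<le> size (filter_mset (\<lambda>y. g ?x \<le> g y) X)"
    using g by (intro size_mset_mono filter_mset_mono_strong) (auto dest: monoD)
  also have "\<dots> \<le> size (filter_mset ((\<le>) (g ?x)) (image_mset g X + Y))"
    by (simp add: filter_mset_image_mset)
  finally show ?thesis
    using k by (subst le_nth_rev_sorted_list_of_multiset_iff) simp_all
qed

definition blowup_graph :: "nat \<Rightarrow> (nat \<Rightarrow> nat \<Rightarrow> bool) \<Rightarrow> nat \<Rightarrow> nat \<Rightarrow> bool" where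
  "blowup_graph n E k l \<longleftrightarrow> k \<noteq> l \<and> (k mod n = l mod n \<or> E (k mod n) (l mod n))"

lemma simple_graph_blowup_graph:
  assumes "simple_graph n E" and "0 < n"
  shows "simple_graph N (blowup_graph n E)"
  using assms by (auto simp: simple_graph_def blowup_graph_def)

lemma adj_matrix_symmetric:
  "simple_graph n E \<Longrightarrow> transpose_mat (adj_matrix n E) = adj_matrix n E"
  by (intro eq_matI) (auto simp: simple_graph_def adj_matrix_def)

lemma adj_matrix_blowup_graph:
  assumes "simple_graph n E" and "0 < n"
  shows "adj_matrix (t * n) (blowup_graph n E) =
    blowup_mat t (adj_matrix n E + 1 \<cdot>\<^sub>m 1\<^sub>m n) + (- 1) \<cdot>\<^sub>m 1\<^sub>m (t * n)"
  using assms
  by (intro eq_matI) (auto simp: simple_graph_def adj_matrix_def blowup_mat_def blowup_graph_def)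

lemma char_poly_adj_matrix_splits:
  assumes "simple_graph n E"
  obtains es where "char_poly (adj_matrix n E) = (\<Prod>a\<leftarrow>es. [:- a, 1:])" "length es = n"
proof -
  have "adj_matrix n E \<in> carrier_mat n n" by (simp add: adj_matrix_def)
  from char_poly_real_symmetric_splits[OF this adj_matrix_symmetric[OF assms]] that
  show thesis by blast
qed

lemma size_eigenvalues_mset: "simple_graph n E \<Longrightarrow> size (eigenvalues_mset n E) = n"
  by (metis char_poly_adj_matrix_splits eigenvalues_mset_def proots_prod_list_linear size_mset)

lemma eigenvalues_mset_blowup_graph:
  assumes sg: "simple_graph n E" and n: "0 < n" and t: "0 < t"
  shows "eigenvalues_mset (t * n) (blowup_graph n E) =
    image_mset (\<lambda>a. real t * (a + 1) - 1) (eigenvalues_mset n E) + replicate_mset ((t - 1) * n) (- 1)"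
proof -
  let ?A = "adj_matrix n E"
  have A: "?A \<in> carrier_mat n n" by (simp add: adj_matrix_def)
  obtain es where es: "char_poly ?A = (\<Prod>a\<leftarrow>es. [:- a, 1:])"
    using char_poly_adj_matrix_splits[OF sg] by blast
  have "char_poly (?A + 1 \<cdot>\<^sub>m 1\<^sub>m n) = (\<Prod>a\<leftarrow>map (\<lambda>a. a + 1) es. [:- a, 1:])"
    by (rule char_poly_add_smult_one[OF A es])
  then have "char_poly (blowup_mat t (?A + 1 \<cdot>\<^sub>m 1\<^sub>m n)) =
      (\<Prod>a\<leftarrow>map (\<lambda>a. real t * a) (map (\<lambda>a. a + 1) es) @ replicate ((t - 1) * n) 0. [:- a, 1:])"
    using A by (intro char_poly_blowup_mat[OF _ n t]) auto
  then have cp: "char_poly (adj_matrix (t * n) (blowup_graph n E)) = (\<Prod>a\<leftarrow>map (\<lambda>a. a + - 1)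
      (map (\<lambda>a. real t * a) (map (\<lambda>a. a + 1) es) @ replicate ((t - 1) * n) 0). [:- a, 1:])"
    unfolding adj_matrix_blowup_graph[OF sg n] using A by (intro char_poly_add_smult_one) auto
  show ?thesis
    unfolding eigenvalues_mset_def cp es proots_prod_list_linear by (simp add: o_def)
qed

lemma lambda3_blowup_graph:
  assumes sg: "simple_graph n E" and n: "3 \<le> n" and t: "0 < t"
  shows "real t * (lambda3 n E + 1) - 1 \<le> lambda3 (t * n) (blowup_graph n E)"
proof -
  have "mono (\<lambda>a. real t * (a + 1) - 1)"
    by (intro monoI) (simp add: mult_left_mono)
  then show ?thesis
    using n t sg nth_rev_sorted_list_of_multiset_image_mono[of _ 2 "eigenvalues_mset n E"]
    by (simp add: lambda3_def kth_largest_eigenvalue_def eigenvalues_mset_blowup_graph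
        size_eigenvalues_mset)
qed

lemma lambda3_normalized_le:
  fixes \<kappa> :: real and f :: "nat \<Rightarrow> real"
  assumes bound: "\<And>n E. 3 \<le> n \<Longrightarrow> simple_graph n E \<Longrightarrow> lambda3 n E \<le> \<kappa> * real n + f n"
    and sg: "simple_graph n E" and n: "3 \<le> n" and t: "0 < t"
  shows "(lambda3 n E + 1) / real n \<le> \<kappa> + (f (t * n) + 1) / real (t * n)"
proof -
  have "1 * n \<le> t * n" using t by (intro mult_le_mono1) simp
  with n have "3 \<le> t * n" by linarith
  from bound[OF this simple_graph_blowup_graph[OF sg]] lambda3_blowup_graph[OF sg n t] n
  have "real t * (lambda3 n E + 1) \<le> \<kappa> * real (t * n) + f (t * n) + 1"
    by simp
  then have "real t * (lambda3 n E + 1) / real (t * n) \<le> (\<kappa> * real (t * n) + f (t * n) + 1) / real (t * n)"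
    by (intro divide_right_mono) simp_all
  moreover have "real t * (lambda3 n E + 1) / real (t * n) = (lambda3 n E + 1) / real n"
    using t by simp
  moreover have "(\<kappa> * real (t * n) + f (t * n) + 1) / real (t * n) = \<kappa> + (f (t * n) + 1) / real (t * n)"
    using n t by (simp add: field_simps)
  ultimately show ?thesis by simp
qed

lemma LIMSEQ_add_one_div_along_multiples:
  fixes f :: "nat \<Rightarrow> real"
  assumes lim: "(\<lambda>m. f m / real m) \<longlonglongrightarrow> 0" and n: "0 < n"
  shows "(\<lambda>t. (f (t * n) + 1) / real (t * n)) \<longlonglongrightarrow> 0"
proof -
  have "(\<lambda>m. f m / real m + 1 / real m) \<longlonglongrightarrow> 0"
    using tendsto_add[OF lim lim_inverse_n'] by simp
  moreover have "strict_mono (\<lambda>t. t * n)"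
    using n by (simp add: strict_mono_def)
  ultimately show ?thesis
    by (auto dest: LIMSEQ_subseq_LIMSEQ simp: o_def add_divide_distrib)
qed

theorem lemma4p3:
  fixes \<kappa> :: real and f :: "nat \<Rightarrow> real"
  assumes bound: "\<And>n E. n \<ge> 3 \<Longrightarrow> simple_graph n E \<Longrightarrow> lambda3 n E \<le> \<kappa> * real n + f n"
    and lim: "(\<lambda>n. f n / real n) \<longlonglongrightarrow> 0"
  shows "\<And>n E. n \<ge> 3 \<Longrightarrow> simple_graph n E \<Longrightarrow> lambda3 n E \<le> \<kappa> * real n - 1"
proof -
  fix n E assume n: "n \<ge> 3" and sg: "simple_graph n E"
  let ?\<mu> = "lambda3 n E"
  have "(\<lambda>t. (f (t * n) + 1) / real (t * n)) \<longlonglongrightarrow> 0"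
    using n by (intro LIMSEQ_add_one_div_along_multiples lim) simp
  then have "(\<lambda>t. \<kappa> + (f (t * n) + 1) / real (t * n)) \<longlonglongrightarrow> \<kappa>"
    using tendsto_add[OF tendsto_const] by fastforce
  then have "(?\<mu> + 1) / real n \<le> \<kappa>"
    by (rule LIMSEQ_le_const)
      (use lambda3_normalized_le[OF bound sg n] in \<open>auto intro: exI[of _ 1]\<close>)
  then show "?\<mu> \<le> \<kappa> * real n - 1"
    using n by (simp add: field_simps)
qed

end
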